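(* Let $M\ge 0$ be an integer, let $a_0,\dots,a_M\in\mathbb{R}$ and let $f_M(x)=\sum_{m=0}^M a_m T_m(x)$, where $T_m(x)=\cos(m\arccos x)$ is the $m$-th Chebyshev polynomial. For each integer $n\ge 0$ and $y\in[-1,1]$ define $$\tilde R_n(y)=\int_{-1}^{y} f_M(y-1-t)\,T_n(t)\,\mathrm{d}t ,$$ i.e. $\tilde R_n(y)$ is the convolution $\int_{-1}^{x+1}f_M(x-t)T_n(t)\,\mathrm{d}t$ evaluated at $x=y-1\in[-2,0]$. Then for all $y\in[-1,1]$: $$\tilde R_0(y)=\int_{-1}^{y} f_M(t)\,\mathrm{d}t,$$ $$\tilde R_1(y)=\int_{-1}^{y}\tilde R_0(s)\,\mathrm{d}s-\tilde R_0(y),$$ $$\tilde R_2(y)=4\int_{-1}^{y}\tilde R_1(s)\,\mathrm{d}s+\tilde R_0(y),$$ and for every $n\ge 2$, $$\tilde R_{n+1}(y)=2(n+1)\int_{-1}^{y}\tilde R_n(s)\,\mathrm{d}s+\frac{n+1}{n-1}\tilde R_{n-1}(y)+\frac{2(-1)^n}{n-1}\int_{-1}^{y} f_M(t)\,\mathrm{d}t.$$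
   Context: $T_m$ denotes the Chebyshev polynomial of the first kind of degree $m$ on $[-1,1]$. The function $\tilde R_n$ is the (left-sided, Volterra-type) convolution of $f_M$ and $T_n$, shifted from $x\in[-2,0]$ to $y=x+1\in[-1,1]$. *)

theory Defs
  imports "HOL-Analysis.Analysis"
begin

text \<open>Chebyshev polynomials of the first kind, as polynomial functions on all of the reals
  (three-term recurrence); on [-1,1] they agree with cos (m * arccos x).\<close>
fun cheb_T :: "nat \<Rightarrow> real \<Rightarrow> real" where
  "cheb_T 0 x = 1"
| "cheb_T (Suc 0) x = x"
| "cheb_T (Suc (Suc n)) x = 2 * x * cheb_T (Suc n) x - cheb_T n x"

definition fM :: "nat \<Rightarrow> (nat \<Rightarrow> real) \<Rightarrow> real \<Rightarrow> real" where
  "fM M a x = (\<Sum>m=0..M. a m * cheb_T m x)"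

definition Rt :: "nat \<Rightarrow> (nat \<Rightarrow> real) \<Rightarrow> nat \<Rightarrow> real \<Rightarrow> real" where
  "Rt M a n y = integral {-1..y} (\<lambda>t. fM M a (y - 1 - t) * cheb_T n t)"

end

theory Submission
  imports Defs
begin

text \<open>Write R_g(y) for the integral of f(y - 1 - t) g(t) over [-1, y]. Differentiating under the
  integral sign, with the moving upper limit, shows that the integral of R_g over [-1, y] is the
  same convolution with f replaced by its primitive F vanishing at -1; integrating that by parts
  against a primitive Q of g turns it into R_Q(y) - F(y) Q(-1). The identities are this formula
  for g = T_n with Q = T_1, Q = T_2/4 and, for n \<ge> 2, Q = T_{n+1}/(2(n+1)) - T_{n-1}/(2(n-1)),
  which is a primitive of T_n because T_{m+1}' = (m+1) U_m and 2 T_n = U_n - U_{n-2} for the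
  Chebyshev polynomials U of the second kind; the sign terms come from T_m(-1) = (-1)^m.
  Taking g = 0 and Q = 1 gives R_{T_0}(y) = F(y).\<close>

lemma leibniz_rule_variable_upper_limit:
  fixes K K' :: "real \<Rightarrow> real \<Rightarrow> real"
  assumes K': "\<And>x t. x \<in> {a..b} \<Longrightarrow> t \<in> {a..b} \<Longrightarrow>
      ((\<lambda>x. K x t) has_real_derivative K' x t) (at x within {a..b})"
    and cont_K': "continuous_on ({a..b} \<times> {a..b}) (\<lambda>(x, t). K' x t)"
    and cont_K: "continuous_on ({a..b} \<times> {a..b}) (\<lambda>(x, t). K x t)"
    and y: "y \<in> {a..b}"
  shows "((\<lambda>x. integral {a..x} (K x)) has_real_derivative integral {a..y} (K' y) + K y y)
      (at y within {a..b})"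
proof -
  let ?I = "{a..b}"
  have "{a..y} \<subseteq> ?I" using y by auto
  have cont_K_x: "continuous_on ?I (K x)" if "x \<in> ?I" for x
  proof -
    have "continuous_on ?I (\<lambda>t. (\<lambda>(x, t). K x t) (x, t))"
      by (rule continuous_on_compose2[OF cont_K]) (use that in \<open>auto intro!: continuous_intros\<close>)
    then show ?thesis by simp
  qed
  have "((\<lambda>x. integral (cbox a y) (K x)) has_real_derivative integral (cbox a y) (K' y))
      (at y within ?I)"
  proof (rule leibniz_rule_field_derivative)
    show "continuous_on (?I \<times> cbox a y) (\<lambda>(x, t). K' x t)"
      using cont_K' \<open>{a..y} \<subseteq> ?I\<close> by (auto intro: continuous_on_subset)
    show "K x integrable_on cbox a y" if "x \<in> ?I" for x
      using cont_K_x[OF that] \<open>{a..y} \<subseteq> ?I\<close>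
      by (metis cbox_interval integrable_continuous_interval continuous_on_subset)
  qed (use K' \<open>{a..y} \<subseteq> ?I\<close> y in auto)
  then have partial_x: "((\<lambda>x. integral {a..y} (K x)) has_derivative (\<lambda>h. integral {a..y} (K' y) * h))
      (at y within ?I)"
    by (simp add: has_field_derivative_def cbox_interval)
  have partial_z: "((\<lambda>z. integral {a..z} (K x)) has_derivative blinfun_mult_right (K x z))
      (at z within ?I)" if "x \<in> ?I" "z \<in> ?I" for x z
    using integral_has_real_derivative[OF cont_K_x[OF that(1)] that(2)]
    by (simp add: has_field_derivative_def)
  have "continuous_on (?I \<times> ?I) (\<lambda>(x, z). blinfun_mult_right (K x z))"
    using bounded_linear.continuous_on[OF bounded_linear_blinfun_mult_right cont_K]
    by (simp add: split_beta)
  then have "continuous (at (y, y) within ?I \<times> ?I) (\<lambda>(x, z). blinfun_mult_right (K x z))"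
    using y by (simp add: continuous_on_eq_continuous_within)
  \<comment> \<open>(x, z) \<mapsto> integral {a..z} (K x) has continuous partial derivatives;
    restrict it to the diagonal.\<close>
  from has_derivative_partialsI[OF partial_x partial_z this y]
  have "((\<lambda>(x, z). integral {a..z} (K x)) has_derivative
      (\<lambda>(tx, tz). integral {a..y} (K' y) * tx + K y y * tz)) (at (y, y) within (\<lambda>s. (s, s)) ` ?I)"
    by (auto intro: has_derivative_subset)
  moreover have "((\<lambda>s. (s, s)) has_derivative (\<lambda>h. (h, h))) (at y within ?I)"
    by (auto intro!: derivative_eq_intros)
  ultimately have "((\<lambda>s. integral {a..s} (K s)) has_derivative (\<lambda>h. integral {a..y} (K' y) * h + K y y * h))
      (at y within ?I)"
    using has_derivative_in_compose by fastforce
  then show ?thesis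
    unfolding has_field_derivative_def by (rule has_derivative_eq_rhs) (auto simp: algebra_simps)
qed

lemma continuous_imp_primitive_vanishing_at:
  fixes f :: "real \<Rightarrow> real"
  assumes "continuous_on UNIV f"
  obtains F where "\<And>x. (F has_real_derivative f x) (at x)" and "F c = 0"
proof -
  obtain F0 where "\<And>x. (F0 has_vector_derivative f x) (at x)"
    using einterval_antiderivative[of "-\<infinity>" "\<infinity>" f] assms
    by (auto simp: continuous_on_eq_continuous_at)
  then have "((\<lambda>x. F0 x - F0 c) has_real_derivative f x) (at x)" for x
    by (auto simp: has_real_derivative_iff_has_vector_derivative intro!: derivative_eq_intros)
  then show ?thesis by (rule that) simp
qed

definition volterra_conv :: "real \<Rightarrow> (real \<Rightarrow> real) \<Rightarrow> (real \<Rightarrow> real) \<Rightarrow> real \<Rightarrow> real" where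
  "volterra_conv c f g y = integral {c..y} (\<lambda>t. f (y + c - t) * g t)"

lemma volterra_conv_integrable:
  fixes f g :: "real \<Rightarrow> real"
  assumes "continuous_on UNIV f" and "continuous_on UNIV g"
  shows "(\<lambda>t. f (y + c - t) * g t) integrable_on {c..y}"
  by (intro integrable_continuous_interval continuous_intros continuous_on_compose2[OF assms(1)]
      continuous_on_subset[OF assms(2)] subset_UNIV)

lemma volterra_conv_diff:
  assumes "continuous_on UNIV f" and "continuous_on UNIV g" and "continuous_on UNIV h"
  shows "volterra_conv c f (\<lambda>t. g t - h t) y = volterra_conv c f g y - volterra_conv c f h y"
  unfolding volterra_conv_def right_diff_distrib
  by (intro integral_diff volterra_conv_integrable assms)

lemma volterra_conv_divide:
  "volterra_conv c f (\<lambda>t. g t / r) y = volterra_conv c f g y / r"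
  by (simp add: volterra_conv_def)

lemma volterra_conv_zero [simp]: "volterra_conv c f (\<lambda>_. 0) = (\<lambda>_. 0)"
  by (simp add: fun_eq_iff volterra_conv_def)

lemma integral_volterra_conv_primitive:
  assumes F: "\<And>x. (F has_real_derivative f x) (at x)" and "F c = 0"
    and f: "continuous_on UNIV f" and g: "continuous_on UNIV g" and "c \<le> y"
  shows "integral {c..y} (volterra_conv c f g) = volterra_conv c F g y"
proof -
  have cont_F: "continuous_on UNIV F"
    using F by (meson DERIV_isCont continuous_at_imp_continuous_on)
  have "(volterra_conv c F g has_real_derivative volterra_conv c f g s) (at s within {c..y})"
    if "s \<in> {c..y}" for s
  proof -
    have "((\<lambda>x. integral {c..x} (\<lambda>t. F (x + c - t) * g t)) has_real_derivative
        integral {c..s} (\<lambda>t. f (s + c - t) * g t) + F (s + c - s) * g s) (at s within {c..y})"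
    proof (rule leibniz_rule_variable_upper_limit[OF _ _ _ that])
      show "((\<lambda>x. F (x + c - t) * g t) has_real_derivative f (x + c - t) * g t) (at x within {c..y})"
        for x t
        by (auto intro!: derivative_eq_intros DERIV_chain2[OF F])
    qed (auto simp: case_prod_beta intro!: continuous_intros continuous_on_compose2[OF f]
        continuous_on_compose2[OF cont_F] continuous_on_compose2[OF g])
    then show ?thesis by (simp add: volterra_conv_def[abs_def] \<open>F c = 0\<close>)
  qed
  then have "(volterra_conv c f g has_integral volterra_conv c F g y - volterra_conv c F g c) {c..y}"
    using \<open>c \<le> y\<close> by (intro fundamental_theorem_of_calculus)
      (auto simp: has_real_derivative_iff_has_vector_derivative)
  then show ?thesis by (simp add: integral_unique volterra_conv_def)
qed

lemma volterra_conv_primitive_by_parts: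
  fixes f g F Q :: "real \<Rightarrow> real"
  assumes F: "\<And>x. (F has_real_derivative f x) (at x)" and "F c = 0"
    and Q: "\<And>x. (Q has_real_derivative g x) (at x)"
    and f: "continuous_on UNIV f" and g: "continuous_on UNIV g" and "c \<le> y"
  shows "volterra_conv c F g y = volterra_conv c f Q y - F y * Q c"
proof -
  have cont_F: "continuous_on UNIV F"
    using F by (meson DERIV_isCont continuous_at_imp_continuous_on)
  have cont_Q: "continuous_on UNIV Q"
    using Q by (meson DERIV_isCont continuous_at_imp_continuous_on)
  have "((\<lambda>t. F (y + c - t) * Q t) has_real_derivative F (y + c - t) * g t - f (y + c - t) * Q t)
      (at t)" for t
  proof -
    have "((\<lambda>t. F (y + c - t)) has_real_derivative f (y + c - t) * - 1) (at t)"
      by (rule DERIV_chain2[OF F]) (auto intro!: derivative_eq_intros)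
    from DERIV_mult[OF this Q] show ?thesis by (simp add: algebra_simps)
  qed
  then have "((\<lambda>t. F (y + c - t) * g t - f (y + c - t) * Q t) has_integral F c * Q y - F y * Q c)
      {c..y}"
    using fundamental_theorem_of_calculus[of c y "\<lambda>t. F (y + c - t) * Q t"] \<open>c \<le> y\<close>
    by (auto simp: has_real_derivative_iff_has_vector_derivative has_vector_derivative_at_within)
  moreover have "((\<lambda>t. F (y + c - t) * g t - f (y + c - t) * Q t) has_integral
      volterra_conv c F g y - volterra_conv c f Q y) {c..y}"
    unfolding volterra_conv_def
    by (intro has_integral_diff integrable_integral volterra_conv_integrable[OF cont_F g]
        volterra_conv_integrable[OF f cont_Q])
  ultimately have "volterra_conv c F g y - volterra_conv c f Q y = F c * Q y - F y * Q c"
    by (metis has_integral_unique)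
  then show ?thesis
    using \<open>F c = 0\<close> by simp
qed

lemma integral_volterra_conv:
  fixes f g Q :: "real \<Rightarrow> real"
  assumes Q: "\<And>x. (Q has_real_derivative g x) (at x)"
    and f: "continuous_on UNIV f" and g: "continuous_on UNIV g" and "c \<le> y"
  shows "integral {c..y} (volterra_conv c f g) = volterra_conv c f Q y - integral {c..y} f * Q c"
proof -
  obtain F where F: "\<And>x. (F has_real_derivative f x) (at x)" and "F c = 0"
    using continuous_imp_primitive_vanishing_at[OF f] by blast
  have "(f has_integral F y - F c) {c..y}"
    using F \<open>c \<le> y\<close> by (intro fundamental_theorem_of_calculus)
      (auto simp: has_real_derivative_iff_has_vector_derivative has_vector_derivative_at_within)
  then have "integral {c..y} f = F y"
    using \<open>F c = 0\<close> by (simp add: integral_unique)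
  with integral_volterra_conv_primitive[OF F \<open>F c = 0\<close> f g \<open>c \<le> y\<close>]
    volterra_conv_primitive_by_parts[OF F \<open>F c = 0\<close> Q f g \<open>c \<le> y\<close>]
  show ?thesis by simp
qed

fun cheb_U :: "nat \<Rightarrow> real \<Rightarrow> real" where
  "cheb_U 0 x = 1"
| "cheb_U (Suc 0) x = 2 * x"
| "cheb_U (Suc (Suc n)) x = 2 * x * cheb_U (Suc n) x - cheb_U n x"

lemma cheb_T_eq_cheb_U_diff: "2 * cheb_T (Suc (Suc n)) x = cheb_U (Suc (Suc n)) x - cheb_U n x"
proof (induction n rule: induct_nat_012)
  case (ge2 n)
  have "cheb_T (Suc (Suc (Suc (Suc n)))) x = 2 * x * cheb_T (Suc (Suc (Suc n))) x - cheb_T (Suc (Suc n)) x"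
    "cheb_U (Suc (Suc (Suc (Suc n)))) x = 2 * x * cheb_U (Suc (Suc (Suc n))) x - cheb_U (Suc (Suc n)) x"
    "cheb_U (Suc (Suc n)) x = 2 * x * cheb_U (Suc n) x - cheb_U n x"
    by (rule cheb_T.simps cheb_U.simps)+
  with ge2.IH show ?case by algebra
qed (simp_all add: algebra_simps)

lemma has_real_derivative_cheb_T:
  "(cheb_T (Suc n) has_real_derivative real (Suc n) * cheb_U n x) (at x)"
proof (induction n arbitrary: x rule: induct_nat_012)
  case 0
  show ?case
    using DERIV_ident by (simp add: fun_eq_iff)
next
  case 1
  have "cheb_T 2 = (\<lambda>x. 2 * x * x - 1)"
    by (simp add: fun_eq_iff numeral_2_eq_2)
  then show ?case
    by (auto intro!: derivative_eq_intros simp: numeral_2_eq_2)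
next
  case (ge2 n)
  have "((\<lambda>x. 2 * x) has_real_derivative 2) (at x)"
    by (auto intro!: derivative_eq_intros)
  from DERIV_diff[OF DERIV_mult[OF this ge2.IH(2)] ge2.IH(1)]
  have "((\<lambda>x. 2 * x * cheb_T (Suc (Suc n)) x - cheb_T (Suc n) x) has_real_derivative
      2 * cheb_T (Suc (Suc n)) x + 2 * x * (real (Suc (Suc n)) * cheb_U (Suc n) x)
      - real (Suc n) * cheb_U n x) (at x)"
    by (simp only: mult.commute)
  moreover have "cheb_T (Suc (Suc (Suc n))) = (\<lambda>x. 2 * x * cheb_T (Suc (Suc n)) x - cheb_T (Suc n) x)"
    by (rule ext) (rule cheb_T.simps)
  moreover have "2 * cheb_T (Suc (Suc n)) x + 2 * x * (real (Suc (Suc n)) * cheb_U (Suc n) x)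
      - real (Suc n) * cheb_U n x = real (Suc (Suc (Suc n))) * cheb_U (Suc (Suc n)) x"
  proof -
    have "2 * x * (real (Suc (Suc n)) * cheb_U (Suc n) x)
        = real (Suc (Suc n)) * (cheb_U (Suc (Suc n)) x + cheb_U n x)"
      by (simp add: algebra_simps)
    with cheb_T_eq_cheb_U_diff[of n x] show ?thesis
      by (simp add: algebra_simps del: cheb_T.simps cheb_U.simps)
  qed
  ultimately show ?case
    by simp
qed

lemma has_real_derivative_cheb_T_primitive:
  assumes "n \<ge> 2"
  shows "((\<lambda>x. cheb_T (n + 1) x / (2 * real (n + 1)) - cheb_T (n - 1) x / (2 * real (n - 1)))
      has_real_derivative cheb_T n x) (at x)"
proof -
  obtain k where "n = Suc (Suc k)"
    using assms by (metis add_2_eq_Suc le_Suc_ex)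
  then have n: "n + 1 = Suc (Suc (Suc k))" "n - 1 = Suc k" "n = Suc (Suc k)"
    by simp_all
  have "((\<lambda>x. cheb_T (n + 1) x / (2 * real (n + 1)) - cheb_T (n - 1) x / (2 * real (n - 1)))
      has_real_derivative real (Suc (Suc (Suc k))) * cheb_U (Suc (Suc k)) x / (2 * real (Suc (Suc (Suc k))))
        - real (Suc k) * cheb_U k x / (2 * real (Suc k))) (at x)"
    unfolding n(1,2) by (intro DERIV_diff DERIV_cdivide has_real_derivative_cheb_T)
  moreover have "real (Suc (Suc (Suc k))) * cheb_U (Suc (Suc k)) x / (2 * real (Suc (Suc (Suc k))))
      - real (Suc k) * cheb_U k x / (2 * real (Suc k)) = cheb_T n x"
    using cheb_T_eq_cheb_U_diff[of k x] unfolding n(3)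
    by (simp del: of_nat_Suc cheb_T.simps cheb_U.simps)
  ultimately show ?thesis
    by simp
qed

lemma continuous_on_cheb_T: "continuous_on UNIV (cheb_T n)"
  by (induction n rule: induct_nat_012) (auto simp: fun_eq_iff intro!: continuous_intros)

lemma cheb_T_minus_one: "cheb_T n (-1) = (-1) ^ n"
  by (induction n rule: induct_nat_012) auto

lemma continuous_on_fM: "continuous_on UNIV (fM M a)"
  unfolding fM_def by (intro continuous_intros continuous_on_compose2[OF continuous_on_cheb_T]) auto

lemma volterra_conv_one:
  fixes f :: "real \<Rightarrow> real"
  assumes "continuous_on UNIV f" and "c \<le> y"
  shows "volterra_conv c f (\<lambda>_. 1) y = integral {c..y} f"
  using integral_volterra_conv[of "\<lambda>_. 1" "\<lambda>_. 0", OF _ assms(1) _ assms(2)] by simp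

context
  fixes f :: "real \<Rightarrow> real" and y :: real
  assumes f: "continuous_on UNIV f" and y: "-1 \<le> y"
begin

lemma volterra_conv_cheb_T_0: "volterra_conv (-1) f (cheb_T 0) y = integral {-1..y} f"
proof -
  have "cheb_T 0 = (\<lambda>_. 1)"
    by (simp add: fun_eq_iff)
  with volterra_conv_one[OF f y] show ?thesis
    by simp
qed

lemma volterra_conv_cheb_T_1:
  "volterra_conv (-1) f (cheb_T 1) y
    = integral {-1..y} (volterra_conv (-1) f (cheb_T 0)) - volterra_conv (-1) f (cheb_T 0) y"
  using integral_volterra_conv[OF _ f continuous_on_cheb_T y, of "cheb_T 1"]
    has_real_derivative_cheb_T[of 0] volterra_conv_cheb_T_0
  by simp

lemma volterra_conv_cheb_T_2:
  "volterra_conv (-1) f (cheb_T 2) y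
    = 4 * integral {-1..y} (volterra_conv (-1) f (cheb_T 1)) + volterra_conv (-1) f (cheb_T 0) y"
proof -
  have "((\<lambda>x. cheb_T 2 x / 4) has_real_derivative cheb_T 1 x) (at x)" for x
    using DERIV_cdivide[OF has_real_derivative_cheb_T[of 1 x], of 4] by (simp add: numeral_2_eq_2)
  from integral_volterra_conv[OF this f continuous_on_cheb_T y]
  show ?thesis
    by (simp add: volterra_conv_divide volterra_conv_cheb_T_0 cheb_T_minus_one)
qed

lemma integral_volterra_conv_cheb_T:
  assumes "n \<ge> 2"
  shows "integral {-1..y} (volterra_conv (-1) f (cheb_T n))
    = volterra_conv (-1) f (cheb_T (n + 1)) y / (2 * real (n + 1))
      - volterra_conv (-1) f (cheb_T (n - 1)) y / (2 * real (n - 1))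
      - integral {-1..y} f * (- ((-1) ^ n) / (2 * real (n + 1)) - - ((-1) ^ n) / (2 * real (n - 1)))"
proof -
  have "continuous_on UNIV (\<lambda>x. cheb_T m x / r)" for m r
    unfolding divide_inverse by (intro continuous_on_mult_right continuous_on_cheb_T)
  then have conv_primitive: "volterra_conv (-1) f
      (\<lambda>x. cheb_T (n + 1) x / (2 * real (n + 1)) - cheb_T (n - 1) x / (2 * real (n - 1))) y
    = volterra_conv (-1) f (cheb_T (n + 1)) y / (2 * real (n + 1))
      - volterra_conv (-1) f (cheb_T (n - 1)) y / (2 * real (n - 1))"
    by (simp only: volterra_conv_diff[OF f] volterra_conv_divide)
  have signs: "(-1::real) ^ (n + 1) = - ((-1) ^ n)" "(-1::real) ^ (n - 1) = - ((-1) ^ n)"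
    using assms by (simp_all add: power_diff)
  show ?thesis
    using integral_volterra_conv[OF has_real_derivative_cheb_T_primitive[OF assms] f
        continuous_on_cheb_T y]
    by (simp only: conv_primitive cheb_T_minus_one signs)
qed

lemma volterra_conv_cheb_T_Suc:
  assumes "n \<ge> 2"
  shows "volterra_conv (-1) f (cheb_T (n + 1)) y
    = 2 * real (n + 1) * integral {-1..y} (volterra_conv (-1) f (cheb_T n))
      + (real (n + 1) / real (n - 1)) * volterra_conv (-1) f (cheb_T (n - 1)) y
      + (2 * (-1) ^ n / real (n - 1)) * integral {-1..y} f"
proof -
  have solve: "A = 2 * p * I + (p / q) * B + (2 * s / q) * S"
    if "I = A / (2 * p) - B / (2 * q) - S * (- s / (2 * p) - - s / (2 * q))" "p = q + 2" "q > 0"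
    for A B I S s p q :: real
  proof -
    have "p > 0"
      using that(2,3) by simp
    then have "2 * p * I = A - p / q * B + S * s * (1 - p / q)"
      unfolding that(1) using that(3) by (simp add: field_simps)
    moreover have "S * s * (1 - p / q) = - (2 * s / q * S)"
      using that(2,3) by (simp add: field_simps)
    ultimately show ?thesis
      by linarith
  qed
  show ?thesis
    by (rule solve[OF integral_volterra_conv_cheb_T[OF assms]]) (use assms in auto)
qed

end

theorem theorem2p2:
  fixes M :: nat and a :: "nat \<Rightarrow> real" and y :: real
  assumes "-1 \<le> y" and "y \<le> 1"
  shows "Rt M a 0 y = integral {-1..y} (\<lambda>t. fM M a t)
       \<and> Rt M a 1 y = integral {-1..y} (\<lambda>s. Rt M a 0 s) - Rt M a 0 y
       \<and> Rt M a 2 y = 4 * integral {-1..y} (\<lambda>s. Rt M a 1 s) + Rt M a 0 y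
       \<and> (\<forall>n\<ge>2. Rt M a (n + 1) y =
           2 * real (n + 1) * integral {-1..y} (\<lambda>s. Rt M a n s)
           + (real (n + 1) / real (n - 1)) * Rt M a (n - 1) y
           + (2 * (-1) ^ n / real (n - 1)) * integral {-1..y} (\<lambda>t. fM M a t))"
proof -
  have Rt: "Rt M a n = volterra_conv (-1) (fM M a) (cheb_T n)" for n
    by (simp add: fun_eq_iff Rt_def volterra_conv_def)
  show ?thesis
    unfolding Rt
    using volterra_conv_cheb_T_0 volterra_conv_cheb_T_1 volterra_conv_cheb_T_2 volterra_conv_cheb_T_Suc
    by (simp add: continuous_on_fM \<open>-1 \<le> y\<close>)
qed

end
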